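(* Let $\mathfrak{g}=\mathfrak{s}(\mathfrak{g})\oplus\mathfrak{c}(\mathfrak{g})$ be a compact Lie algebra, where $\mathfrak{s}(\mathfrak{g})=[\mathfrak{g},\mathfrak{g}]$ is its semisimple part and $\mathfrak{c}(\mathfrak{g})$ its center, let $\mathfrak{h}$ be a Lie subalgebra of $\mathfrak{g}$ with semisimple part $\mathfrak{s}(\mathfrak{h})=[\mathfrak{h},\mathfrak{h}]$, and let $\phi$ be a finite-dimensional faithful and semisimple complex representation of $\mathfrak{g}$. If $\dim(\mathrm{com}[(\phi\otimes\phi)|_{\mathfrak{h}}])=\dim(\mathrm{com}[\phi\otimes\phi])$, then $\mathfrak{s}(\mathfrak{h})=\mathfrak{s}(\mathfrak{g})$.
   Context: Representations are finite-dimensional complex matrix representations; semisimple means completely reducible. $(\phi\otimes\phi)(g)=\phi(g)\otimes\mathbb 1+\mathbb 1\otimes\phi(g)$. $\mathrm{com}[\psi]$ is the space of complex matrices commuting with all $\psi(g)$; $|_{\mathfrak{h}}$ denotes restriction. *)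

theory Defs
  imports "HOL-Analysis.Analysis"
begin

text \<open>Lie algebras are modelled on a whole real vector space type 'g with bracket br.\<close>

definition lie_algebra :: "('g::real_vector \<Rightarrow> 'g \<Rightarrow> 'g) \<Rightarrow> bool" where
  "lie_algebra br \<longleftrightarrow> bilinear br \<and> (\<forall>x. br x x = 0) \<and>
     (\<forall>x y z. br x (br y z) + br y (br z x) + br z (br x y) = 0)"

definition finite_dim_space :: "'g::real_vector itself \<Rightarrow> bool" where
  "finite_dim_space _ \<longleftrightarrow> (\<exists>B::'g set. finite B \<and> span B = UNIV)"

definition compact_lie_algebra :: "('g::real_vector \<Rightarrow> 'g \<Rightarrow> 'g) \<Rightarrow> bool" where
  "compact_lie_algebra br \<longleftrightarrow> lie_algebra br \<and> finite_dim_space TYPE('g) \<and>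
     (\<exists>B :: 'g \<Rightarrow> 'g \<Rightarrow> real. bilinear B \<and> (\<forall>x y. B x y = B y x) \<and>
        (\<forall>x. x \<noteq> 0 \<longrightarrow> B x x > 0) \<and>
        (\<forall>x y z. B (br x y) z + B y (br x z) = 0))"

definition lie_subalgebra :: "('g::real_vector \<Rightarrow> 'g \<Rightarrow> 'g) \<Rightarrow> 'g set \<Rightarrow> bool" where
  "lie_subalgebra br H \<longleftrightarrow> subspace H \<and> (\<forall>x\<in>H. \<forall>y\<in>H. br x y \<in> H)"

definition derived :: "('g::real_vector \<Rightarrow> 'g \<Rightarrow> 'g) \<Rightarrow> 'g set \<Rightarrow> 'g set" where
  "derived br H = span {br x y | x y. x \<in> H \<and> y \<in> H}"

definition mat_comm :: "complex^'n^'n \<Rightarrow> complex^'n^'n \<Rightarrow> complex^'n^'n" where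
  "mat_comm A B = A ** B - B ** A"

definition lie_rep :: "('g::real_vector \<Rightarrow> 'g \<Rightarrow> 'g) \<Rightarrow> ('g \<Rightarrow> complex^'n^'n) \<Rightarrow> bool" where
  "lie_rep br \<phi> \<longleftrightarrow> linear \<phi> \<and> (\<forall>x y. \<phi> (br x y) = mat_comm (\<phi> x) (\<phi> y))"

definition faithful :: "('g \<Rightarrow> complex^'n^'n) \<Rightarrow> bool" where
  "faithful \<phi> \<longleftrightarrow> inj \<phi>"

definition csubspace :: "(complex^'n) set \<Rightarrow> bool" where
  "csubspace W \<longleftrightarrow> 0 \<in> W \<and> (\<forall>v\<in>W. \<forall>w\<in>W. v + w \<in> W) \<and> (\<forall>c. \<forall>v\<in>W. c *s v \<in> W)"

definition invariant_subspace :: "('g \<Rightarrow> complex^'n^'n) \<Rightarrow> (complex^'n) set \<Rightarrow> bool" where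
  "invariant_subspace \<phi> W \<longleftrightarrow> csubspace W \<and> (\<forall>x. \<forall>v\<in>W. \<phi> x *v v \<in> W)"

definition semisimple_rep :: "('g \<Rightarrow> complex^'n^'n) \<Rightarrow> bool" where
  "semisimple_rep \<phi> \<longleftrightarrow> (\<forall>W. invariant_subspace \<phi> W \<longrightarrow>
     (\<exists>U. invariant_subspace \<phi> U \<and> W \<inter> U = {0} \<and> {w + u | w u. w \<in> W \<and> u \<in> U} = UNIV))"

definition kron :: "complex^'n^'n \<Rightarrow> complex^'m^'m \<Rightarrow> complex^('n \<times> 'm)^('n \<times> 'm)" where
  "kron A B = (\<chi> p q. A $ fst p $ fst q * B $ snd p $ snd q)"

definition tensor_rep :: "('g \<Rightarrow> complex^'n^'n) \<Rightarrow> 'g \<Rightarrow> complex^('n \<times> 'n)^('n \<times> 'n)" where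
  "tensor_rep \<phi> x = kron (\<phi> x) (mat 1) + kron (mat 1) (\<phi> x)"

definition com :: "('g \<Rightarrow> complex^'k^'k) \<Rightarrow> 'g set \<Rightarrow> (complex^'k^'k) set" where
  "com \<psi> S = {M. \<forall>x\<in>S. M ** \<psi> x = \<psi> x ** M}"

definition cscale :: "complex \<Rightarrow> complex^'k^'k \<Rightarrow> complex^'k^'k" where
  "cscale c M = (\<chi> i j. c * M $ i $ j)"

definition cdim :: "(complex^'k^'k) set \<Rightarrow> nat" where
  "cdim S = vector_space.dim cscale S"

end

theory Submission
  imports Defs
begin

text \<open>
  Fix an ad-invariant inner product \<open>B\<close> on \<open>\<g>\<close>. The commutant of \<open>\<phi> \<otimes> \<phi>\<close> is contained in
  that of its restriction to \<open>\<h>\<close>, so equal dimensions make the two commutants equal.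
  Applied to \<open>\<phi>(u) \<otimes> \<phi>(u)\<close>, this shows that every \<open>u\<close> centralizing \<open>\<h>\<close> is central.
  Applied to the Casimir element \<open>\<Sum> \<phi>(e) \<otimes> \<phi>(e)\<close> of an orthonormal basis of \<open>\<h>\<close>, and after
  contracting one tensor factor against a functional, it shows that \<open>[y, h] = 0\<close> whenever
  \<open>y \<perp> \<h>\<close> and \<open>h \<in> \<h>\<close>. Hence \<open>\<h>\<^sup>\<perp>\<close> lies in the center, \<open>\<g> = \<h> + \<h>\<^sup>\<perp>\<close>, and
  \<open>[\<g>, \<g>] = [\<h>, \<h>]\<close>.
\<close>

lemma cscale_nth [simp]: "cscale c M $ i $ j = c * M $ i $ j"
  by (simp add: cscale_def)

interpretation cmat: vector_space "cscale :: complex \<Rightarrow> complex^'k^'k \<Rightarrow> _"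
  by unfold_locales (auto simp: vec_eq_iff algebra_simps)

definition matrix_unit :: "'k \<times> 'k \<Rightarrow> complex^'k^'k" where
  "matrix_unit p = (\<chi> i j. if (i, j) = p then 1 else 0)"

lemma sum_matrix_units:
  "(\<Sum>p\<in>UNIV. cscale (f p) (matrix_unit p)) = (\<chi> i j. f (i, j) :: complex^'k::finite^'k)"
proof -
  have "(\<Sum>p\<in>UNIV. f p * (if (i, j) = p then 1 else 0)) = f (i, j)" for i j
    by (simp add: if_distrib cong: if_cong)
  then show ?thesis by (simp add: vec_eq_iff matrix_unit_def)
qed

interpretation cmat: finite_dimensional_vector_space
  "cscale :: complex \<Rightarrow> complex^'k::finite^'k \<Rightarrow> _" "range matrix_unit"
proof
  have inj: "inj (matrix_unit :: 'k \<times> 'k \<Rightarrow> _)"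
  proof (rule injI)
    fix p q :: "'k \<times> 'k"
    assume "matrix_unit p = matrix_unit q"
    then have "matrix_unit p $ fst p $ snd p = matrix_unit q $ fst p $ snd p" by simp
    then show "p = q" by (simp add: matrix_unit_def split: if_splits)
  qed
  show "\<not> cmat.dependent (range (matrix_unit :: 'k \<times> 'k \<Rightarrow> _))"
  proof
    assume "cmat.dependent (range (matrix_unit :: 'k \<times> 'k \<Rightarrow> _))"
    then obtain u where "(\<Sum>v\<in>range matrix_unit. cscale (u v) v) = (0 :: complex^'k^'k)"
      and "\<exists>v\<in>range matrix_unit. u v \<noteq> 0"
      by (auto simp: cmat.dependent_finite)
    moreover have "(\<Sum>v\<in>range matrix_unit. cscale (u v) v) = (\<chi> i j. u (matrix_unit (i, j)))"
      by (simp add: sum.reindex[OF inj] sum_matrix_units)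
    ultimately show False by (auto simp: vec_eq_iff)
  qed
  show "cmat.span (range matrix_unit) = (UNIV :: (complex^'k^'k) set)"
  proof (intro set_eqI iffI)
    fix M :: "complex^'k^'k"
    have "M = (\<Sum>p\<in>UNIV. cscale (M $ fst p $ snd p) (matrix_unit p))"
      by (simp add: sum_matrix_units vec_eq_iff)
    also have "\<dots> \<in> cmat.span (range matrix_unit)"
      by (intro cmat.span_sum cmat.span_scale cmat.span_base) auto
    finally show "M \<in> cmat.span (range matrix_unit)" .
  qed simp
qed simp

lemma matrix_add_rdistrib: "((B::'a::semiring_1^'n^'m) + C) ** A = B ** A + C ** A"
  by (simp add: vec_eq_iff matrix_matrix_mult_def sum.distrib algebra_simps)

lemma commutator_sum:
  fixes A :: "'a::ring_1^'n^'n"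
  shows "A ** (\<Sum>e\<in>S. f e) - (\<Sum>e\<in>S. f e) ** A = (\<Sum>e\<in>S. A ** f e - f e ** A)"
  by (induction S rule: infinite_finite_induct) (auto simp: matrix_add_ldistrib matrix_add_rdistrib)

lemma cscale_matrix_mult_left: "cscale c A ** B = cscale c (A ** B)"
  by (simp add: vec_eq_iff matrix_matrix_mult_def sum_distrib_left mult.assoc)

lemma cscale_matrix_mult_right: "A ** cscale c B = cscale c (A ** B)"
  by (simp add: vec_eq_iff matrix_matrix_mult_def sum_distrib_left mult_ac)

lemma cscale_Complex: "cscale (Complex r s) M = r *\<^sub>R M + cscale \<i> (s *\<^sub>R M)"
  by (simp add: vec_eq_iff complex_eq_iff)

lemma mat_comm_cscale_left: "mat_comm (cscale c A) B = cscale c (mat_comm A B)"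
  by (simp add: mat_comm_def cscale_matrix_mult_left cscale_matrix_mult_right
      cmat.scale_right_diff_distrib)

lemma mat_comm_cscale_right: "mat_comm A (cscale c B) = cscale c (mat_comm A B)"
  by (simp add: mat_comm_def cscale_matrix_mult_left cscale_matrix_mult_right
      cmat.scale_right_diff_distrib)

lemma mem_com_iff: "M \<in> com \<psi> S \<longleftrightarrow> (\<forall>x\<in>S. \<psi> x ** M - M ** \<psi> x = 0)"
  by (auto simp: com_def)

lemma subspace_com: "cmat.subspace (com \<psi> S)"
  by (auto simp: cmat.subspace_def com_def matrix_add_ldistrib matrix_add_rdistrib
      cscale_matrix_mult_left cscale_matrix_mult_right)

lemma com_eq_if_cdim_eq:
  assumes "S \<subseteq> T" and "cdim (com \<psi> S) = cdim (com \<psi> T)"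
  shows "com \<psi> S = com \<psi> T"
proof -
  have "com \<psi> T \<subseteq> com \<psi> S" using assms(1) by (auto simp: com_def)
  then have "cmat.span (com \<psi> T) = cmat.span (com \<psi> S)"
    using assms(2) by (intro cmat.dim_eq_span) (simp_all add: cdim_def)
  then show ?thesis by (metis cmat.span_eq_iff subspace_com)
qed

lemma kron_nth [simp]: "kron A B $ p $ q = A $ fst p $ fst q * B $ snd p $ snd q"
  by (simp add: kron_def)

lemma bilinear_kron: "bilinear kron"
  by (simp add: bilinear_def linear_iff vec_eq_iff algebra_simps)

lemma kron_mult: "kron A B ** kron C D = kron (A ** C) (B ** D)"
proof -
  have "(\<Sum>p\<in>UNIV. A $ i $ fst p * B $ k $ snd p * (C $ fst p $ j * D $ snd p $ l))
      = (\<Sum>p\<in>UNIV. A $ i $ p * C $ p $ j) * (\<Sum>q\<in>UNIV. B $ k $ q * D $ q $ l)" for i j k l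
    by (simp add: sum_product sum.cartesian_product' UNIV_Times_UNIV[symmetric] mult_ac
        del: UNIV_Times_UNIV)
  then show ?thesis
    by (simp add: vec_eq_iff matrix_matrix_mult_def)
qed

lemma tensor_rep_commutator:
  "tensor_rep \<phi> x ** kron P Q - kron P Q ** tensor_rep \<phi> x
     = kron (mat_comm (\<phi> x) P) Q + kron P (mat_comm (\<phi> x) Q)"
  by (simp add: tensor_rep_def matrix_add_ldistrib matrix_add_rdistrib kron_mult mat_comm_def
      bilinear_lsub[OF bilinear_kron] bilinear_rsub[OF bilinear_kron])

lemma kron_symmetric_sum_eq_zero:
  assumes "kron C A + kron A C = 0" and "A \<noteq> 0"
  shows "C = 0"
proof -
  from assms(2) obtain k l where kl: "A $ k $ l \<noteq> 0" by (metis vec_eq_iff zero_index)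
  have entry: "C $ a $ b * A $ c $ d + A $ a $ b * C $ c $ d = 0" for a b c d
    using arg_cong[OF assms(1), of "\<lambda>M. M $ (a, c) $ (b, d)"] by simp
  have "C $ k $ l = 0" using entry[of k l k l] kl by (simp add: mult.commute)
  then show ?thesis using entry[of _ _ k l] kl by (simp add: vec_eq_iff)
qed

definition complexify :: "(complex^'k^'k \<Rightarrow> real) \<Rightarrow> complex^'k^'k \<Rightarrow> complex" where
  "complexify F M = of_real (F M) - \<i> * of_real (F (cscale \<i> M))"

lemma Re_complexify [simp]: "Re (complexify F M) = F M"
  by (simp add: complexify_def)

lemma module_hom_complexify:
  fixes F :: "complex^'k^'k \<Rightarrow> real"
  assumes "linear F"
  shows "module_hom cscale (*) (complexify F)"
proof unfold_locales
  interpret F: linear F by fact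
  fix M N :: "complex^'k^'k" and c :: complex
  show "complexify F (M + N) = complexify F M + complexify F N"
    by (simp add: complexify_def F.add algebra_simps)
  have "cscale c M = Re c *\<^sub>R M + Im c *\<^sub>R cscale \<i> M"
    and "cscale \<i> (cscale c M) = Re c *\<^sub>R cscale \<i> M - Im c *\<^sub>R M"
    by (simp_all add: vec_eq_iff complex_eq_iff)
  then show "complexify F (cscale c M) = c * complexify F M"
    by (simp add: complexify_def F.add F.diff F.scale complex_eq_iff)
qed

text \<open>\<open>contract_right L\<close> is \<open>id \<otimes> L\<close> on matrices over the tensor product.\<close>
definition contract_right ::
    "(complex^'m^'m \<Rightarrow> complex) \<Rightarrow> complex^('n \<times> 'm)^('n \<times> 'm) \<Rightarrow> complex^'n^'n" where
  "contract_right L T = (\<chi> i j. L (\<chi> k l. T $ (i, k) $ (j, l)))"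

lemma module_hom_contract_right:
  fixes L :: "complex^'m::finite^'m \<Rightarrow> complex"
  assumes "module_hom cscale (*) L"
  shows "module_hom cscale cscale (contract_right L)"
proof -
  interpret L: module_hom cscale "(*)" L by fact
  show ?thesis
  proof unfold_locales
    fix T U :: "complex^('n::finite \<times> 'm)^('n \<times> 'm)" and c :: complex
    have add: "(\<chi> k l. (T + U) $ (i, k) $ (j, l))
        = (\<chi> k l. T $ (i, k) $ (j, l)) + (\<chi> k l. U $ (i, k) $ (j, l))"
      and scale: "(\<chi> k l. cscale c T $ (i, k) $ (j, l)) = cscale c (\<chi> k l. T $ (i, k) $ (j, l))"
      for i j by (simp_all add: vec_eq_iff)
    show "contract_right L (T + U) = contract_right L T + contract_right L U"
      unfolding contract_right_def add by (simp add: vec_eq_iff L.add)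
    show "contract_right L (cscale c T) = cscale c (contract_right L T)"
      unfolding contract_right_def scale by (simp add: vec_eq_iff L.scale)
  qed
qed

lemma contract_right_kron:
  assumes "module_hom cscale (*) L"
  shows "contract_right L (kron A B) = cscale (L B) A"
proof -
  interpret L: module_hom cscale "(*)" L by fact
  have "contract_right L (kron A B) $ i $ j = L (cscale (A $ i $ j) B)" for i j
    by (simp add: contract_right_def cscale_def kron_def)
  then show ?thesis by (simp add: vec_eq_iff L.scale mult.commute)
qed

definition orthonormal :: "('g \<Rightarrow> 'g \<Rightarrow> real) \<Rightarrow> 'g set \<Rightarrow> bool" where
  "orthonormal B E \<longleftrightarrow> (\<forall>e\<in>E. \<forall>e'\<in>E. B e e' = (if e = e' then 1 else 0))"

locale inner_form =
  fixes B :: "'g::real_vector \<Rightarrow> 'g \<Rightarrow> real"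
  assumes bilinear: "bilinear B"
    and sym: "B x y = B y x"
    and pos: "x \<noteq> 0 \<Longrightarrow> B x x > 0"
begin

lemma linear_left: "linear (\<lambda>x. B x y)" and linear_right: "linear (\<lambda>y. B x y)"
  using bilinear by (auto simp: bilinear_def)

lemma sum_left: "B (\<Sum>e\<in>S. f e) y = (\<Sum>e\<in>S. B (f e) y)"
  using linear_sum[OF linear_left] by (simp add: o_def)

lemma sum_right: "B y (\<Sum>e\<in>S. f e) = (\<Sum>e\<in>S. B y (f e))"
  using linear_sum[OF linear_right] by (simp add: o_def)

lemma scale_left: "B (c *\<^sub>R x) y = c * B x y"
  using bilinear_lmul[OF bilinear] by simp

lemma scale_right: "B x (c *\<^sub>R y) = c * B x y"
  using bilinear_rmul[OF bilinear] by simp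

lemma zero_left [simp]: "B 0 y = 0" and zero_right [simp]: "B x 0 = 0"
  by (simp_all add: bilinear_lzero[OF bilinear] bilinear_rzero[OF bilinear])

lemma nonneg: "B x x \<ge> 0"
  using pos[of x] by (cases "x = 0") auto

lemma self_eq_zero_iff: "B x x = 0 \<longleftrightarrow> x = 0"
  by (metis less_irrefl pos zero_left)

lemma orthonormal_coeff:
  assumes "finite E" "orthonormal B E" "e0 \<in> E"
  shows "B (\<Sum>e\<in>E. c e *\<^sub>R e) e0 = c e0"
proof -
  have "B (\<Sum>e\<in>E. c e *\<^sub>R e) e0 = (\<Sum>e\<in>E. c e * B e e0)"
    by (simp add: sum_left scale_left)
  also have "\<dots> = (\<Sum>e\<in>E. if e = e0 then c e else 0)"
    using assms(2,3) by (intro sum.cong) (auto simp: orthonormal_def)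
  finally show ?thesis using assms(1,3) by simp
qed

lemma orthonormal_expansion:
  assumes "finite E" "orthonormal B E" "x \<in> span E"
  shows "x = (\<Sum>e\<in>E. B x e *\<^sub>R e)"
proof -
  from assms(1,3) obtain c where x: "x = (\<Sum>e\<in>E. c e *\<^sub>R e)"
    by (auto simp: span_finite)
  then have "B x e = c e" if "e \<in> E" for e
    using orthonormal_coeff[OF assms(1,2) that] by simp
  then show ?thesis using x by simp
qed

lemma orthogonal_projection:
  assumes "finite E" "orthonormal B E" "h \<in> span E"
  shows "B (x - (\<Sum>e\<in>E. B x e *\<^sub>R e)) h = 0"
proof -
  have "B (x - (\<Sum>e\<in>E. B x e *\<^sub>R e)) e = 0" if "e \<in> E" for e
    using orthonormal_coeff[OF assms(1,2) that, of "\<lambda>e. B x e"]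
    by (simp add: bilinear_lsub[OF bilinear])
  then show ?thesis
    by (subst orthonormal_expansion[OF assms]) (simp add: sum_right scale_right)
qed

lemma orthonormal_extend:
  assumes "finite E" "orthonormal B E" "x \<notin> span E"
  obtains e where "orthonormal B (insert e E)" "span (insert e E) = span (insert x E)"
proof -
  define p where "p = (\<Sum>e\<in>E. B x e *\<^sub>R e)"
  have p: "p \<in> span E" unfolding p_def by (intro span_sum span_scale span_base)
  then have "x - p \<noteq> 0" using assms(3) by auto
  then have r: "sqrt (B (x - p) (x - p)) > 0" using pos by simp
  define e where "e = (1 / sqrt (B (x - p) (x - p))) *\<^sub>R (x - p)"
  have "B e e = 1"
    using r by (simp add: e_def scale_left scale_right power2_eq_square[symmetric])
  moreover have "B e e' = 0" and "B e' e = 0" if "e' \<in> E" for e'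
    using orthogonal_projection[OF assms(1,2) span_base[OF that], of x]
    by (simp_all add: e_def p_def scale_left sym[of e'])
  ultimately have "orthonormal B (insert e E)"
    using assms(2) unfolding orthonormal_def by auto
  moreover have "span (insert e E) = span (insert (x - p) E)"
  proof -
    have "x - p = sqrt (B (x - p) (x - p)) *\<^sub>R e"
      using r by (simp add: e_def)
    then have "x - p \<in> span (insert e E)" by (metis span_scale span_base insertI1)
    moreover have "e \<in> span (insert (x - p) E)"
      unfolding e_def by (intro span_scale span_base) simp
    ultimately show ?thesis unfolding span_eq by (auto intro: span_base)
  qed
  moreover have "span (insert (x - p) E) = span (insert x E)"
    using p by (intro eq_span_insert_eq) (simp add: span_neg)
  ultimately show ?thesis by (metis that)
qed

lemma gram_schmidt:
  assumes "finite S"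
  obtains E where "finite E" "orthonormal B E" "span E = span S"
  using assms
proof (induction S arbitrary: thesis rule: finite_induct)
  case empty
  show ?case by (rule empty.prems[of "{}"]) (simp_all add: orthonormal_def)
next
  case (insert x S)
  obtain E where E: "finite E" "orthonormal B E" "span E = span S" by (rule insert.IH)
  have span_xS: "span (insert x S) = span (insert x E)" using E(3) by (simp add: span_insert)
  show ?case
  proof (cases "x \<in> span E")
    case True
    with E span_xS show ?thesis by (intro insert.prems[of E]) (simp_all add: span_redundant)
  next
    case False
    with E(1,2) obtain e where "orthonormal B (insert e E)" "span (insert e E) = span (insert x E)"
      by (rule orthonormal_extend)
    with E(1) span_xS show ?thesis by (intro insert.prems[of "insert e E"]) simp_all
  qed
qed

lemma subspace_orthonormal_basis:
  assumes "finite_dim_space TYPE('g)" and "subspace H"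
  obtains E where "finite E" "orthonormal B E" "span E = H"
proof -
  obtain G :: "'g set" where G: "finite G" "span G = UNIV"
    using assms(1) by (auto simp: finite_dim_space_def)
  obtain b where b: "b \<subseteq> H" "independent b" "H \<subseteq> span b" by (meson basis_exists)
  have "finite b" using independent_span_bound[OF G(1) b(2)] G(2) by auto
  then obtain E where "finite E" "orthonormal B E" "span E = span b" by (rule gram_schmidt)
  with span_subspace[OF b(1,3) assms(2)] show ?thesis using that by simp
qed

end

locale invariant_form = inner_form B for B :: "'g::real_vector \<Rightarrow> 'g \<Rightarrow> real" +
  fixes br :: "'g \<Rightarrow> 'g \<Rightarrow> 'g"
  assumes lie_algebra: "lie_algebra br"
    and invariant: "B (br x y) z + B y (br x z) = 0"
begin

lemma bilinear_bracket: "bilinear br"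
  using lie_algebra by (simp add: lie_algebra_def)

lemma bracket_antisym: "br x y = - br y x"
proof -
  have "br (x + y) (x + y) = 0" "br x x = 0" "br y y = 0"
    using lie_algebra by (simp_all add: lie_algebra_def)
  then have "br x y + br y x = 0"
    by (simp add: bilinear_ladd[OF bilinear_bracket] bilinear_radd[OF bilinear_bracket]
        add.commute)
  then show ?thesis by (simp add: eq_neg_iff_add_eq_0)
qed

lemma linear_bracket_right: "linear (br x)"
  using bilinear_bracket by (simp add: bilinear_def)

lemma form_bracket_bracket: "B (br x y) (br x y) = - B y (br x (br x y))"
  using invariant[of x y "br x y"] by simp

lemma casimir_invariant:
  fixes T :: "'g \<Rightarrow> 'g \<Rightarrow> 'm::real_vector"
  assumes "bilinear T" and E: "finite E" "orthonormal B E" and "\<forall>e\<in>E. br h e \<in> span E"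
  shows "(\<Sum>e\<in>E. T (br h e) e + T e (br h e)) = 0"
proof -
  define c where "c e e' = B (br h e) e'" for e e'
  have br_expand: "br h e = (\<Sum>e'\<in>E. c e e' *\<^sub>R e')" if "e \<in> E" for e
    unfolding c_def using orthonormal_expansion[OF E] assms(4) that by blast
  have c_antisym: "c e e' *\<^sub>R T e e' = - (c e' e *\<^sub>R T e e')" for e e'
    using invariant[of h e e'] sym[of e "br h e'"] by (simp add: c_def flip: scaleR_minus_left)
  interpret T_left: linear "\<lambda>x. T x y" for y using assms(1) by (simp add: bilinear_def)
  interpret T_right: linear "\<lambda>y. T x y" for x using assms(1) by (simp add: bilinear_def)
  have "(\<Sum>e\<in>E. T e (br h e)) = (\<Sum>e\<in>E. \<Sum>e'\<in>E. c e e' *\<^sub>R T e e')"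
    by (intro sum.cong) (simp_all add: br_expand T_right.sum T_right.scale)
  also have "\<dots> = (\<Sum>e'\<in>E. \<Sum>e\<in>E. c e e' *\<^sub>R T e e')"
    by (rule sum.swap)
  also have "\<dots> = - (\<Sum>e'\<in>E. \<Sum>e\<in>E. c e' e *\<^sub>R T e e')"
    by (simp only: c_antisym sum_negf)
  also have "\<dots> = - (\<Sum>e\<in>E. T (br h e) e)"
    by (simp add: br_expand T_left.sum T_left.scale)
  finally show ?thesis by (simp add: sum.distrib)
qed

end

locale faithful_invariant_rep = invariant_form B br
  for B :: "'g::real_vector \<Rightarrow> 'g \<Rightarrow> real" and br +
  fixes \<phi> :: "'g \<Rightarrow> complex^'n::finite^'n"
  assumes lie_rep: "lie_rep br \<phi>" and faithful: "faithful \<phi>"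
begin

lemma linear_rep: "linear \<phi>" and rep_bracket: "\<phi> (br x y) = mat_comm (\<phi> x) (\<phi> y)"
  using lie_rep by (simp_all add: lie_rep_def)

lemma rep_eq_iff [simp]: "\<phi> x = \<phi> y \<longleftrightarrow> x = y"
  using faithful by (auto simp: faithful_def inj_def)

lemma rep_eq_0_iff [simp]: "\<phi> x = 0 \<longleftrightarrow> x = 0"
  using rep_eq_iff[of x 0] linear_0[OF linear_rep] by simp

text \<open>Here \<open>ad y\<^sup>2 = - ad x\<^sup>2\<close>, while both squares are negative semidefinite because \<open>ad\<close> is
  skew for the invariant form; hence \<open>ad x = 0\<close>.\<close>
lemma central_if_rep_eq_i_rep:
  assumes "\<phi> y = cscale \<i> (\<phi> x)"
  shows "br x z = 0"
proof -
  have "\<phi> (br y (br y z)) = \<phi> (- br x (br x z))"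
    using assms by (simp add: rep_bracket linear_neg[OF linear_rep] mat_comm_cscale_left
        mat_comm_cscale_right cmat.scale_minus_left[of 1, simplified])
  then have "B (br y z) (br y z) = - B (br x z) (br x z)"
    by (simp add: form_bracket_bracket bilinear_rneg[OF bilinear])
  then show ?thesis
    using nonneg[of "br x z"] nonneg[of "br y z"] self_eq_zero_iff by fastforce
qed

lemma tensor_rep_commutator_rep:
  "tensor_rep \<phi> x ** kron (\<phi> a) (\<phi> b) - kron (\<phi> a) (\<phi> b) ** tensor_rep \<phi> x
     = kron (\<phi> (br x a)) (\<phi> b) + kron (\<phi> a) (\<phi> (br x b))"
  by (simp add: tensor_rep_commutator rep_bracket)

lemma complex_functional_extending_form:
  obtains L where "module_hom cscale (*) L" and "\<And>a. Re (L (\<phi> a)) = B a h"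
proof -
  obtain \<psi> where "linear \<psi>" "\<psi> \<circ> \<phi> = id"
    using linear_injective_left_inverse[OF linear_rep] faithful by (auto simp: faithful_def)
  then show ?thesis
    using module_hom_complexify[OF linear_compose[OF _ linear_left]]
    by (intro that[of "complexify ((\<lambda>x. B x h) \<circ> \<psi>)"]) (simp_all add: pointfree_idE)
qed

lemma bilinear_kron_rep: "bilinear (\<lambda>a b. kron (\<phi> a) (\<phi> b))"
proof -
  have "linear (\<lambda>C. kron A C)" and "linear (\<lambda>A. kron A C)" for A C :: "complex^'n^'n"
    by (metis bilinear_def bilinear_kron)+
  from linear_compose[OF linear_rep this(1)] linear_compose[OF linear_rep this(2)]
  show ?thesis by (simp add: bilinear_def o_def)
qed

end

locale equal_tensor_commutants = faithful_invariant_rep B br \<phi>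
  for B :: "'g::real_vector \<Rightarrow> 'g \<Rightarrow> real" and br and \<phi> :: "'g \<Rightarrow> complex^'n::finite^'n" +
  fixes H :: "'g set" and E :: "'g set"
  assumes subalgebra: "lie_subalgebra br H"
    and basis: "finite E" "orthonormal B E" "span E = H"
    and com_eq: "com (tensor_rep \<phi>) H = com (tensor_rep \<phi>) UNIV"
begin

lemma basis_subset: "E \<subseteq> H"
  using basis(3) span_superset by blast

lemma bracket_mem: "h \<in> H \<Longrightarrow> h' \<in> H \<Longrightarrow> br h h' \<in> H"
  using subalgebra by (simp add: lie_subalgebra_def)

lemma orthogonal_bracket:
  assumes "\<forall>h''\<in>H. B y h'' = 0" and "h \<in> H" and "h' \<in> H"
  shows "B (br y h') h = 0"
proof -
  have "B (br y h) h' = 0"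
    using invariant[of h y h'] assms bracket_mem bracket_antisym[of h y]
    by (simp add: bilinear_lneg[OF bilinear])
  then show ?thesis using invariant[of y h' h] sym[of h' "br y h"] by simp
qed

lemma central_if_centralizes_subalgebra:
  assumes "\<forall>h\<in>H. br h u = 0"
  shows "br x u = 0"
proof -
  have "kron (\<phi> u) (\<phi> u) \<in> com (tensor_rep \<phi>) H"
    using assms by (simp add: mem_com_iff tensor_rep_commutator_rep linear_0[OF linear_rep]
        bilinear_lzero[OF bilinear_kron] bilinear_rzero[OF bilinear_kron])
  then have eq: "kron (\<phi> (br x u)) (\<phi> u) + kron (\<phi> u) (\<phi> (br x u)) = 0"
    by (simp add: com_eq mem_com_iff tensor_rep_commutator_rep)
  show ?thesis
  proof (cases "u = 0")
    case True
    then show ?thesis by (simp add: bilinear_rzero[OF bilinear_bracket])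
  next
    case False
    then show ?thesis using kron_symmetric_sum_eq_zero[OF eq] by simp
  qed
qed

lemma casimir_commutator_eq_zero:
  "(\<Sum>e\<in>E. kron (\<phi> (br y e)) (\<phi> e) + kron (\<phi> e) (\<phi> (br y e))) = 0"
proof -
  define casimir where "casimir = (\<Sum>e\<in>E. kron (\<phi> e) (\<phi> e))"
  have commutator: "tensor_rep \<phi> x ** casimir - casimir ** tensor_rep \<phi> x
      = (\<Sum>e\<in>E. kron (\<phi> (br x e)) (\<phi> e) + kron (\<phi> e) (\<phi> (br x e)))" for x
    by (simp add: casimir_def commutator_sum tensor_rep_commutator_rep)
  have "\<forall>e\<in>E. br h e \<in> span E" if "h \<in> H" for h
    using that bracket_mem basis_subset basis(3) by auto
  then have "casimir \<in> com (tensor_rep \<phi>) H"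
    using casimir_invariant[OF bilinear_kron_rep basis(1,2)] by (simp add: mem_com_iff commutator)
  then show ?thesis using commutator[of y] by (simp add: com_eq mem_com_iff)
qed

text \<open>Apply \<open>id \<otimes> L\<close> to the Casimir identity, where \<open>L\<close> is complex linear with
  \<open>Re (L (\<phi> a)) = B a h\<close>. This yields \<open>\<phi> a1 + \<i> \<phi> a2 = 0\<close>, so \<open>a1\<close> is central, and
  orthogonality of \<open>y\<close> to \<open>H\<close> makes \<open>a1 = [y, h]\<close>.\<close>
lemma bracket_eq_zero_if_orthogonal:
  assumes y: "\<forall>h'\<in>H. B y h' = 0" and h: "h \<in> H"
  shows "br y h = 0"
proof -
  obtain L where L: "module_hom cscale (*) L" and L_re: "\<And>a. Re (L (\<phi> a)) = B a h"
    using complex_functional_extending_form[where h = h] by blast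
  interpret contract: module_hom cscale cscale "contract_right L"
    by (rule module_hom_contract_right[OF L])
  define G where "G a = Im (L (\<phi> a))" for a
  have L_rep: "L (\<phi> a) = Complex (B a h) (G a)" for a
    by (simp add: G_def L_re complex_eq_iff)
  define a1 where "a1 = (\<Sum>e\<in>E. B e h *\<^sub>R br y e + B (br y e) h *\<^sub>R e)"
  define a2 where "a2 = (\<Sum>e\<in>E. G e *\<^sub>R br y e + G (br y e) *\<^sub>R e)"
  have "\<phi> a1 + cscale \<i> (\<phi> a2)
      = contract_right L (\<Sum>e\<in>E. kron (\<phi> (br y e)) (\<phi> e) + kron (\<phi> e) (\<phi> (br y e)))"
    by (simp add: a1_def a2_def contract.sum contract.add contract_right_kron[OF L] L_rep
        cscale_Complex linear_sum[OF linear_rep] linear_add[OF linear_rep]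
        linear_scale[OF linear_rep] o_def cmat.scale_sum_right sum.distrib algebra_simps)
  then have "cscale \<i> (\<phi> a1 + cscale \<i> (\<phi> a2)) = 0"
    by (simp add: casimir_commutator_eq_zero)
  then have "\<phi> a2 = cscale \<i> (\<phi> a1)"
    by (simp add: cmat.scale_right_distrib cmat.scale_minus_left[of 1, simplified])
  then have a1_central: "br a1 z = 0" for z
    by (rule central_if_rep_eq_i_rep)
  have "a1 = (\<Sum>e\<in>E. B h e *\<^sub>R br y e)"
    unfolding a1_def using orthogonal_bracket[OF y h] basis_subset
    by (intro sum.cong) (auto simp: sym[of _ h])
  also have "\<dots> = br y (\<Sum>e\<in>E. B h e *\<^sub>R e)"
    by (simp add: linear_sum[OF linear_bracket_right] linear_scale[OF linear_bracket_right] o_def)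
  also have "(\<Sum>e\<in>E. B h e *\<^sub>R e) = h"
    using orthonormal_expansion[OF basis(1,2)] h basis(3) by simp
  finally have "br y (br y h) = 0"
    using a1_central[of y] bracket_antisym[of a1 y] by simp
  then show ?thesis
    using form_bracket_bracket[of y h] self_eq_zero_iff by simp
qed

lemma central_if_orthogonal:
  assumes "\<forall>h\<in>H. B y h = 0"
  shows "br x y = 0"
proof (rule central_if_centralizes_subalgebra, intro ballI)
  fix h
  assume "h \<in> H"
  with assms have "br y h = 0" by (rule bracket_eq_zero_if_orthogonal)
  then show "br h y = 0" using bracket_antisym[of h y] by simp
qed

lemma derived_eq: "derived br H = derived br UNIV"
proof
  show "derived br H \<subseteq> derived br UNIV"
    unfolding derived_def by (rule span_mono) auto
  define p where "p x = (\<Sum>e\<in>E. B x e *\<^sub>R e)" for x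
  have p_mem: "p x \<in> H" for x
    unfolding p_def basis(3)[symmetric] by (intro span_sum span_scale span_base)
  have "br z (x - p x) = 0" for x z
    using orthogonal_projection[OF basis(1,2)] basis(3)
    by (intro central_if_orthogonal) (simp add: p_def)
  moreover have "br (x - p x) z = 0" for x z
    using calculation[of z x] bracket_antisym[of "x - p x" z] by simp
  ultimately have "br a b = br (p a) (p b)" for a b
    by (simp add: bilinear_lsub[OF bilinear_bracket] bilinear_rsub[OF bilinear_bracket])
  then have "{br x y |x y. x \<in> UNIV \<and> y \<in> UNIV} \<subseteq> {br x y |x y. x \<in> H \<and> y \<in> H}"
    using p_mem by blast
  then show "derived br UNIV \<subseteq> derived br H"
    unfolding derived_def by (rule span_mono)
qed

end

theorem theorem9:
  fixes br :: "'g::real_vector \<Rightarrow> 'g \<Rightarrow> 'g"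
    and H :: "'g set"
    and \<phi> :: "'g \<Rightarrow> complex^'n^'n"
  assumes "compact_lie_algebra br"
    and "lie_subalgebra br H"
    and "lie_rep br \<phi>"
    and "faithful \<phi>"
    and "semisimple_rep \<phi>"
    and "cdim (com (tensor_rep \<phi>) H) = cdim (com (tensor_rep \<phi>) UNIV)"
  shows "derived br H = derived br UNIV"
proof -
  obtain B where "inner_form B" "\<forall>x y z. B (br x y) z + B y (br x z) = 0"
    using assms(1) by (auto simp: compact_lie_algebra_def inner_form_def)
  then interpret invariant_form B br
    using assms(1) by (simp add: invariant_form_def invariant_form_axioms_def compact_lie_algebra_def)
  have "finite_dim_space TYPE('g)" and "subspace H"
    using assms(1,2) by (simp_all add: compact_lie_algebra_def lie_subalgebra_def)
  then obtain E where "finite E" "orthonormal B E" "span E = H"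
    by (rule subspace_orthonormal_basis)
  moreover have "com (tensor_rep \<phi>) H = com (tensor_rep \<phi>) UNIV"
    using assms(6) by (intro com_eq_if_cdim_eq) simp_all
  ultimately interpret equal_tensor_commutants B br \<phi> H E
    using assms(2-4) by unfold_locales
  show ?thesis by (rule derived_eq)
qed

end
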